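(* Let $c$ be a cell of the basic hexagonal model and $\mathcal{N}_c$ its set of direct neighbours. If $N=\{n\in\mathcal{N}_c:\tau(n)<\tau(c)\}$, then $\tau_N(c)=\tau(c)$.
   Context: In the basic hexagonal model each cell $c$ has initial non-negative integer values $x(c,0)$ (resistance) and $y(c,0)$ (fuel); direct neighbours are cells sharing an edge. The ignition time $\tau(c)\in\mathbb{N}\cup\{\infty\}$ of $c$ is the moment $c$ ignites, and it satisfies $\tau(c)=\min\{t\in\mathbb{N}: x(c,0)\le\sum_{n\in\mathcal{N}_c}\max(0,\min(t-\tau(n),y(n,0)))\}$, where the minimum of the empty set is $\infty$ and $t-\infty=-\infty$. For a subset $N\subseteq\mathcal{N}_c$, the predicted ignition time is $\tau_N(c)=\min\{t\in\mathbb{N}: x(c,0)\le\sum_{n\in N}\max(0,\min(t-\tau(n),y(n,0)))\}$ (again $\infty$ if the set is empty), i.e. the time at which $c$ would ignite if the cells of $N$ were its only neighbours. *)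

theory Defs
  imports Main "HOL-Library.Extended_Nat"
begin

text \<open>Cells of the hexagonal grid in axial coordinates; direct neighbours share an edge.\<close>
type_synonym cell = "int \<times> int"

definition nbrs :: "cell \<Rightarrow> cell set" where
  "nbrs c = (case c of (i, j) \<Rightarrow>
     {(i + 1, j), (i - 1, j), (i, j + 1), (i, j - 1), (i + 1, j - 1), (i - 1, j + 1)})"

text \<open>Contribution max(0, min(t - tau(n), y(n,0))) of a neighbour, with t - infinity = -infinity.\<close>
definition contrib :: "nat \<Rightarrow> enat \<Rightarrow> nat \<Rightarrow> int" where
  "contrib t tn yn = (case tn of
      \<infinity> \<Rightarrow> 0
    | enat s \<Rightarrow> max 0 (min (int t - int s) (int yn)))"

definition pred_time :: "(cell \<Rightarrow> nat) \<Rightarrow> (cell \<Rightarrow> nat) \<Rightarrow> (cell \<Rightarrow> enat) \<Rightarrow> cell set \<Rightarrow> cell \<Rightarrow> enat" where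
  "pred_time x y tau N c =
     (if \<exists>t::nat. int (x c) \<le> (\<Sum>n\<in>N. contrib t (tau n) (y n))
      then enat (LEAST t::nat. int (x c) \<le> (\<Sum>n\<in>N. contrib t (tau n) (y n)))
      else \<infinity>)"

definition is_ignition_time :: "(cell \<Rightarrow> nat) \<Rightarrow> (cell \<Rightarrow> nat) \<Rightarrow> (cell \<Rightarrow> enat) \<Rightarrow> bool" where
  "is_ignition_time x y tau \<longleftrightarrow> (\<forall>c. tau c = pred_time x y tau (nbrs c) c)"

end

theory Submission
  imports Defs
begin

text \<open>A neighbour that has not ignited before time \<open>t\<close> contributes nothing at time \<open>t\<close>.
  Hence, up to the ignition time of \<open>c\<close>, the neighbours igniting strictly before \<open>c\<close> supply
  the same total contribution as all neighbours, and the least time at which this total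
  reaches the resistance of \<open>c\<close> is the same for both sets.\<close>

lemma finite_nbrs: "finite (nbrs c)"
  by (cases c) (simp add: nbrs_def)

lemma contrib_eq_0_if_not_ignited: "enat t \<le> tn \<Longrightarrow> contrib t tn yn = 0"
  by (cases tn) (auto simp: contrib_def)

lemma sum_contrib_ignited_before:
  assumes "finite M" and "enat t \<le> s"
  shows "(\<Sum>n\<in>{n \<in> M. tau n < s}. contrib t (tau n) (y n)) = (\<Sum>n\<in>M. contrib t (tau n) (y n))"
proof (rule sum.mono_neutral_left)
  show "\<forall>n\<in>M - {n \<in> M. tau n < s}. contrib t (tau n) (y n) = 0"
    using assms(2) by (auto intro!: contrib_eq_0_if_not_ignited simp: not_less intro: order_trans)
qed (use assms(1) in auto)

lemma pred_time_cong_upto: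
  assumes agree: "\<And>t. enat t \<le> pred_time x y tau M c \<Longrightarrow>
    (\<Sum>n\<in>N. contrib t (tau n) (y n)) = (\<Sum>n\<in>M. contrib t (tau n) (y n))"
  shows "pred_time x y tau N c = pred_time x y tau M c"
proof -
  let ?P = "\<lambda>t. int (x c) \<le> (\<Sum>n\<in>M. contrib t (tau n) (y n))"
  let ?Q = "\<lambda>t. int (x c) \<le> (\<Sum>n\<in>N. contrib t (tau n) (y n))"
  show ?thesis
  proof (cases "\<exists>t. ?P t")
    case True
    define T where "T = (LEAST t. ?P t)"
    have PT: "?P T"
      unfolding T_def using True by (rule LeastI_ex)
    have M_time: "pred_time x y tau M c = enat T"
      unfolding pred_time_def T_def using True by (rule if_P)
    have QP: "?Q t \<longleftrightarrow> ?P t" if "t \<le> T" for t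
    proof -
      have "enat t \<le> pred_time x y tau M c"
        using that by (simp add: M_time)
      then show ?thesis
        by (simp only: agree)
    qed
    have QT: "?Q T"
      using QP[of T] PT by simp
    have "(LEAST t. ?Q t) = T"
    proof (rule Least_equality)
      fix t assume "?Q t"
      show "T \<le> t"
      proof (cases "t \<le> T")
        case True
        then have "?P t" using QP \<open>?Q t\<close> by blast
        then show ?thesis unfolding T_def by (rule Least_le)
      qed simp
    qed (rule QT)
    then have "pred_time x y tau N c = enat T"
      unfolding pred_time_def using QT by auto
    with M_time show ?thesis by simp
  next
    case False
    then have "pred_time x y tau M c = \<infinity>"
      by (simp add: pred_time_def)
    then have "?Q t \<longleftrightarrow> ?P t" for t
      by (simp only: agree enat_ord_code)
    then show ?thesis
      using False by (simp add: pred_time_def)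
  qed
qed

theorem lemma5:
  fixes x y :: "cell \<Rightarrow> nat" and tau :: "cell \<Rightarrow> enat" and c :: cell
  assumes "is_ignition_time x y tau"
  shows "pred_time x y tau {n \<in> nbrs c. tau n < tau c} c = tau c"
proof -
  have tau_c: "tau c = pred_time x y tau (nbrs c) c"
    using assms unfolding is_ignition_time_def by blast
  have "pred_time x y tau {n \<in> nbrs c. tau n < tau c} c = pred_time x y tau (nbrs c) c"
    by (rule pred_time_cong_upto)
      (simp add: sum_contrib_ignited_before finite_nbrs tau_c[symmetric])
  also note tau_c[symmetric]
  finally show ?thesis .
qed

end
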